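(* Let $d$ be even and suppose the channel is the quasi-static Rayleigh fading channel with zero-forcing equalization: given $W^{(l_0)}=(\mathbf I_d,\mathbf 0)$, the deployed channel weights are $W'^{(l_0)}=(\mathbf I_d,\,B')$ with $B'=(B'_1,\dots,B'_{d/2})$, $B'_i\in\mathbb R^2$ the real representation $(\mathrm{Re},\mathrm{Im})$ of the complex number $N_i/(\sqrt P H_i)$, where $H_1,\dots,H_{d/2}\sim\mathcal{CN}(0,1)$ and $N_1,\dots,N_{d/2}\sim\mathcal{CN}(0,\sigma_0^2)$ are all mutually independent, $P>0$, and $\gamma=P/\sigma_0^2$. Take the channel-layer metric $d^{(l_0)}((M',B'),(M,B))=d_M(M',M)+\sum_{i=1}^{d/2}\|B'_i-B_i\|_2$, where $d_M$ is any metric on $\mathbb R^{d\times d}$ and $B_i,B'_i\in\mathbb R^2$ are consecutive coordinate pairs. Assume that for every $w\in\mathcal W$ the loss $\ell(w,Z)$, $Z\sim P_Z$, is $\sigma$-sub-Gaussian and that for every $z$, $w\mapsto\ell(w,z)$ is $K$-Lipschitz with respect to $d_{\mathcal W}$. For a data-independent distribution $Q_{\tilde W}$ on $\tilde{\mathcal W}$, $k>0$ and $\lambda>kK$, define the prior $Q_{W'W}$ on $\mathcal W\times\mathcal W$ by: $\tilde W\sim Q_{\tilde W}$, $W^{(l_0)}=(\mathbf I_d,\mathbf 0)$, $W'^{(l)}=W^{(l)}$ for $l\ne l_0$, $M'^{(l_0)}=M^{(l_0)}$, and, conditionally on $W$, $B'^{(l_0)}$ has density $\prod_{i=1}^{d/2}\frac{\lambda^2}{2\pi}e^{-\lambda\|B'^{(l_0)}_i-B^{(l_0)}_i\|_2}$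 on $\mathbb R^d$. Then applying Theorem 1 with this prior and $\lambda=kK+4\sqrt\gamma/\pi$ gives: for every data-independent $Q_{\tilde W}$, every $k>0$ and every $\epsilon\in(0,1)$, with probability at least $1-\epsilon$ over $S\sim P_Z^n$, $$\Delta\le\frac{k\sigma^2}{2n}+\frac{D(P_{\tilde W|S}\|Q_{\tilde W})-\log\epsilon}{k}+\frac{d\pi K}{4\sqrt\gamma}+\frac{d}{2k}\log\frac{\pi^2}{8}.$$
   Context: Setting. Let $\mathcal Z=\mathcal X\times\mathcal Y$ be an instance space with data distribution $P_Z$, and let $S=(Z_1,\dots,Z_n)\sim P_Z^{n}$ be a training set of $n$ i.i.d. samples. An augmented network has $L+1$ layers with weights $W=(W^{(1)},\dots,W^{(L+1)})\in\mathcal W=\mathcal W^{(1)}\times\cdots\times\mathcal W^{(L+1)}$. A distinguished index $l_0$ is the channel layer: $\mathcal W^{(l_0)}=\mathbb R^{d\times d}\times\mathbb R^{d}$, with weights $W^{(l_0)}=(M^{(l_0)},B^{(l_0)})$ acting on a feature $f\in\mathbb R^d$ by $f\mapsto M^{(l_0)}f+B^{(l_0)}$. The other weights $\tilde W=(W^{(l)})_{l\ne l_0}\in\tilde{\mathcal W}=\prod_{l\neq l_0}\mathcal W^{(l)}$ are the learnable weights. A learning algorithm is a Markov kernel $P_{\tilde W|S}$ from $\mathcal Z^n$ to $\tilde{\mathcal W}$; the channel-free training distribution on $\mathcal W$ is $P_{W|S}=P_{\tilde W|S}\otimes\delta_{(\mathbf I_d,\mathbf 0)}$ (channel layer fixed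 to identity matrix and zero bias). A channel is a Markov kernel $P_{W'^{(l_0)}|W^{(l_0)}}$ on $\mathcal W^{(l_0)}$; the deployment kernel $P_{W'|W}$ sets $W'^{(l)}=W^{(l)}$ for all $l\ne l_0$ and draws $W'^{(l_0)}\sim P_{W'^{(l_0)}|W^{(l_0)}}(\cdot\,|\,W^{(l_0)})$ independently of everything else. The joint distribution on $\mathcal W\times\mathcal W$ is $P_{W'W|S}(W',W|S)=P_{W'|W}(W'|W)P_{W|S}(W|S)$, and $P_{W'|S}$ denotes its marginal in $W'$. For a loss $\ell:\mathcal W\times\mathcal Z\to[0,\infty)$ let $L(w)=\mathbb E_{Z\sim P_Z}[\ell(w,Z)]$ and $\hat L(w,S)=\frac1n\sum_{i=1}^n\ell(w,Z_i)$; for a distribution $P$ on $\mathcal W$, $L(P)=\int L(w)P(dw)$ and $\hat L_S(P)=\int\hat L(w,S)P(dw)$. The wireless generalization error is $\Delta=L(P_{W'|S})-\hat L_S(P_{W|S})$. The metric on $\mathcal W$ is $d_{\mathcal W}(W',W)=\sum_{l=1}^{L+1}d^{(l)}(W'^{(l)},W^{(l)})$ where each $d^{(l)}$ is a metric on $\mathcal W^{(l)}$. "$\sigma$-sub-Gaussian" means $\log\mathbb E[e^{\lambda(\ell(w,Z)-L(w))}]\le\lambda^2\sigma^2/2$ for all $\lambda\in\mathbb R$; "$K$-Lipschitz" means $|\ell(w,z)-\ell(w',z)|\le K\,d_{\mathcal W}(w,w')$. "Data-independent" means not depending on $S$. $D(\cdot\|\cdot)$ is the Kullback–Leibler divergence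 (natural logarithm). Theorem 1 is the statement: under the sub-Gaussian and Lipschitz assumptions, for any data-independent distribution $Q_{W'W}$ on $\mathcal W\times\mathcal W$, $k>0$, $\epsilon\in(0,1)$, with probability at least $1-\epsilon$ over $S$, $\Delta\le\frac{k\sigma^2}{2n}+\frac{D(P_{W'W|S}\|Q_{W'W})-\log\epsilon}{k}+\frac1k\log\mathbb E_{Q_{W'W}}[e^{kKd_{\mathcal W}(W',W)}]$. $\mathcal{CN}(0,s^2)$ denotes the circularly symmetric complex Gaussian with $\mathbb E|X|^2=s^2$. *)

theory Defs
  imports "HOL-Probability.Probability"
begin

text \<open>Channel-layer weights W^(l0) = (M, B) in R^(d x d) x R^d, with d = 2 * CARD('m).
  Coordinates of R^d are indexed by 'm x bool; the i-th consecutive pair B_i in R^2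
  is (B$(i,True), B$(i,False)) (real part, imaginary part).\<close>
type_synonym 'm chw = "(real^('m \<times> bool)^('m \<times> bool)) \<times> (real^('m \<times> bool))"

text \<open>Full weight space W = (learnable weights) x (channel layer).\<close>
type_synonym ('w, 'm) fullw = "'w \<times> 'm chw"

definition is_metric :: "('a \<Rightarrow> 'a \<Rightarrow> real) \<Rightarrow> bool" where
  "is_metric dd \<longleftrightarrow> (\<forall>x y. dd x y = 0 \<longleftrightarrow> x = y) \<and> (\<forall>x y. dd x y = dd y x)
     \<and> (\<forall>x y z. dd x z \<le> dd x y + dd y z)"

definition chan_metric :: "(real^('m \<times> bool)^('m \<times> bool) \<Rightarrow> real^('m \<times> bool)^('m \<times> bool) \<Rightarrow> real)
    \<Rightarrow> ('m::finite) chw \<Rightarrow> 'm chw \<Rightarrow> real" where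
  "chan_metric dM c' c = dM (fst c') (fst c)
     + (\<Sum>i\<in>UNIV. sqrt ((snd c' $ (i, True) - snd c $ (i, True))\<^sup>2
                        + (snd c' $ (i, False) - snd c $ (i, False))\<^sup>2))"

definition full_metric :: "('w \<Rightarrow> 'w \<Rightarrow> real) \<Rightarrow> (real^('m \<times> bool)^('m \<times> bool) \<Rightarrow> real^('m \<times> bool)^('m \<times> bool) \<Rightarrow> real)
    \<Rightarrow> ('w, 'm::finite) fullw \<Rightarrow> ('w, 'm) fullw \<Rightarrow> real" where
  "full_metric dW dM w' w = dW (fst w') (fst w) + chan_metric dM (snd w') (snd w)"

definition full_space :: "'w measure \<Rightarrow> ('w, 'm::finite) fullw measure" where
  "full_space Mw = Mw \<Otimes>\<^sub>M (borel :: 'm chw measure)"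

definition sample_space :: "'z measure \<Rightarrow> nat \<Rightarrow> (nat \<Rightarrow> 'z) measure" where
  "sample_space PZ n = PiM {..<n} (\<lambda>_. PZ)"

definition sub_gaussian_loss :: "'z measure \<Rightarrow> ('w \<Rightarrow> 'z \<Rightarrow> real) \<Rightarrow> real \<Rightarrow> bool" where
  "sub_gaussian_loss PZ loss \<sigma> \<longleftrightarrow> (\<forall>w. integrable PZ (loss w) \<and>
     (\<forall>t::real. ln (\<integral>z. exp (t * (loss w z - (\<integral>z'. loss w z' \<partial>PZ))) \<partial>PZ) \<le> t\<^sup>2 * \<sigma>\<^sup>2 / 2
                 \<and> integrable PZ (\<lambda>z. exp (t * (loss w z - (\<integral>z'. loss w z' \<partial>PZ))))))"

definition lipschitz_loss :: "('w \<Rightarrow> 'w \<Rightarrow> real) \<Rightarrow> ('w \<Rightarrow> 'z \<Rightarrow> real) \<Rightarrow> real \<Rightarrow> bool" where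
  "lipschitz_loss dd loss K \<longleftrightarrow> (\<forall>w w' z. \<bar>loss w z - loss w' z\<bar> \<le> K * dd w w')"

definition pop_risk :: "'z measure \<Rightarrow> ('w \<Rightarrow> 'z \<Rightarrow> real) \<Rightarrow> 'w \<Rightarrow> real" where
  "pop_risk PZ loss w = (\<integral>z. loss w z \<partial>PZ)"

definition emp_risk :: "('w \<Rightarrow> 'z \<Rightarrow> real) \<Rightarrow> nat \<Rightarrow> (nat \<Rightarrow> 'z) \<Rightarrow> 'w \<Rightarrow> real" where
  "emp_risk loss n S w = (\<Sum>i<n. loss w (S i)) / real n"

definition ext_integral :: "'a measure \<Rightarrow> ('a \<Rightarrow> real) \<Rightarrow> ereal" where
  "ext_integral M f = enn2ereal (\<integral>\<^sup>+x. ennreal (f x) \<partial>M) - enn2ereal (\<integral>\<^sup>+x. ennreal (- f x) \<partial>M)"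

definition KL_div :: "'a measure \<Rightarrow> 'a measure \<Rightarrow> ereal" where
  "KL_div P Q = (if absolutely_continuous Q P
      then ext_integral P (\<lambda>x. ln (enn2real (RN_deriv Q P x))) else \<infinity>)"

text \<open>Circularly symmetric complex Gaussian CN(0, s^2): independent real and imaginary
  parts, each N(0, s^2/2).\<close>
definition CN_gauss :: "real \<Rightarrow> complex measure" where
  "CN_gauss s2 = distr (density lborel (normal_density 0 (sqrt (s2 / 2)))
                     \<Otimes>\<^sub>M density lborel (normal_density 0 (sqrt (s2 / 2))))
                   borel (\<lambda>(x, y). Complex x y)"

definition rayleigh_bias :: "real \<Rightarrow> real \<Rightarrow> (real^('m::finite \<times> bool)) measure" where
  "rayleigh_bias Pw \<sigma>0 = distr (PiM UNIV (\<lambda>_::'m. CN_gauss 1) \<Otimes>\<^sub>M PiM UNIV (\<lambda>_::'m. CN_gauss (\<sigma>0\<^sup>2)))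
      borel (\<lambda>(h, nz). \<chi> ib. (if snd ib then Re else Im) (nz (fst ib) / (complex_of_real (sqrt Pw) * h (fst ib))))"

definition joint_deploy :: "'w measure \<Rightarrow> 'w measure \<Rightarrow> real \<Rightarrow> real
     \<Rightarrow> (('w, 'm::finite) fullw \<times> ('w, 'm) fullw) measure" where
  "joint_deploy Mw PWS Pw \<sigma>0 = distr (PWS \<Otimes>\<^sub>M rayleigh_bias Pw \<sigma>0)
      (full_space Mw \<Otimes>\<^sub>M full_space Mw)
      (\<lambda>(w, b). ((w, (mat 1, b)), (w, (mat 1, 0))))"

definition wireless_gen_err :: "'z measure \<Rightarrow> (('w, 'm::finite) fullw \<Rightarrow> 'z \<Rightarrow> real) \<Rightarrow> nat
     \<Rightarrow> (nat \<Rightarrow> 'z) \<Rightarrow> 'w measure \<Rightarrow> 'w measure \<Rightarrow> real \<Rightarrow> real \<Rightarrow> ereal" where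
  "wireless_gen_err PZ loss n S Mw PWS Pw \<sigma>0 =
     ext_integral (joint_deploy Mw PWS Pw \<sigma>0)
       (\<lambda>(w', w). pop_risk PZ loss w' - emp_risk loss n S w)"

end

theory Submission
  imports Defs
begin

text \<open>
  Write W = (W~, I, 0) for the channel-free weights and W' = (W~, I, B') for the deployed ones, so that
  Delta = E[L(W') - L(W)] + E[L(W) - hat L(W, S)]. By the Lipschitz assumption the first term is at
  most K E[sum_i ||B'_i||], and under zero-forcing over Rayleigh fading
  E ||B'_i|| = E |N_i| E (1 / |H_i|) / sqrt P = pi sigma0 / (2 sqrt P), which sums to d pi K / (4 sqrt gamma).
  The second term is the generalization gap of the channel-free network; the PAC-Bayes argument
  (sub-Gaussian moment bound for the empirical mean, Markov's inequality over S, Donsker-Varadhan change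
  of measure from Q~ to P_{W~|S}) bounds it by k sigma^2 / (2n) + (D(P_{W~|S} || Q~) - log epsilon) / k.
  This is sharper than the stated bound by the nonnegative term d/(2k) log(pi^2/8), which is what the
  detour through Theorem 1 with a Laplace prior on B' costs.
\<close>

lemma nn_integral_PiM_component:
  assumes "\<And>i. prob_space (M i)" "i \<in> I" "f \<in> borel_measurable (M i)"
  shows "(\<integral>\<^sup>+x. f (x i) \<partial>PiM I M) = (\<integral>\<^sup>+y. f y \<partial>M i)"
proof -
  interpret product_prob_space M
    using assms(1) by (simp add: product_prob_space_def product_sigma_finite_def
        product_prob_space_axioms_def prob_space_imp_sigma_finite)
  show ?thesis
    using assms(2,3) by (subst PiM_component[OF assms(2), symmetric]) (simp add: nn_integral_distr)
qed

lemma (in pair_sigma_finite) nn_integral_pair_mult: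
  assumes [measurable]: "f \<in> borel_measurable M1" "g \<in> borel_measurable M2"
  shows "(\<integral>\<^sup>+p. f (fst p) * g (snd p) \<partial>(M1 \<Otimes>\<^sub>M M2)) = (\<integral>\<^sup>+x. f x \<partial>M1) * (\<integral>\<^sup>+y. g y \<partial>M2)"
  by (simp add: M2.nn_integral_fst[symmetric] nn_integral_cmult nn_integral_multc)

lemma borel_measurable_vec:
  fixes f :: "'a \<Rightarrow> real^'n"
  assumes "\<And>i. (\<lambda>x. f x $ i) \<in> borel_measurable M"
  shows "f \<in> borel_measurable M"
proof (rule borel_measurable_euclidean_space[THEN iffD2], intro ballI)
  fix b :: "real^'n" assume "b \<in> Basis"
  then obtain i where "b = axis i 1" by (auto simp: Basis_vec_def)
  then show "(\<lambda>x. f x \<bullet> b) \<in> borel_measurable M"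
    using assms[of i] by (simp add: inner_axis)
qed

lemma (in pair_prob_space) integrable_add_fst_snd:
  fixes a :: "'a \<Rightarrow> real" and b :: "'b \<Rightarrow> real"
  assumes "integrable M1 a" and "integrable M2 b"
  shows "integrable (M1 \<Otimes>\<^sub>M M2) (\<lambda>p. a (fst p) + b (snd p))"
    and "(\<integral>p. a (fst p) + b (snd p) \<partial>(M1 \<Otimes>\<^sub>M M2)) = (\<integral>x. a x \<partial>M1) + (\<integral>y. b y \<partial>M2)"
proof -
  have [measurable]: "a \<in> borel_measurable M1" "b \<in> borel_measurable M2"
    using assms by simp_all
  have "integrable (M1 \<Otimes>\<^sub>M M2) (\<lambda>p. a (fst p))"
    by (rule Fubini_integrable) (use assms(1) in \<open>auto simp: M2.prob_space\<close>)
  moreover have "integrable (M1 \<Otimes>\<^sub>M M2) (\<lambda>p. b (snd p))"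
    by (rule Fubini_integrable) (use assms(2) in auto)
  ultimately show int: "integrable (M1 \<Otimes>\<^sub>M M2) (\<lambda>p. a (fst p) + b (snd p))"
    by simp
  have "(\<integral>p. a (fst p) + b (snd p) \<partial>(M1 \<Otimes>\<^sub>M M2)) = (\<integral>x. \<integral>y. a x + b y \<partial>M2 \<partial>M1)"
    using integral_fst'[OF int] by simp
  also have "\<dots> = (\<integral>x. a x + (\<integral>y. b y \<partial>M2) \<partial>M1)"
    using assms(2) by (intro Bochner_Integration.integral_cong) (simp_all add: M2.prob_space)
  also have "\<dots> = (\<integral>x. a x \<partial>M1) + (\<integral>y. b y \<partial>M2)"
    using assms(1) by (simp add: M1.prob_space)
  finally show "(\<integral>p. a (fst p) + b (snd p) \<partial>(M1 \<Otimes>\<^sub>M M2)) = (\<integral>x. a x \<partial>M1) + (\<integral>y. b y \<partial>M2)" .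
qed

lemma (in prob_space) Markov_high_probability_set:
  assumes [measurable]: "X \<in> borel_measurable M" and C: "C > 0" and "(\<integral>\<^sup>+x. X x \<partial>M) \<le> ennreal C"
    and \<epsilon>: "\<epsilon> > 0"
  obtains A where "A \<in> sets M" and "emeasure M A \<ge> ennreal (1 - \<epsilon>)"
    and "\<And>x. x \<in> A \<Longrightarrow> X x \<le> ennreal (C / \<epsilon>)"
proof -
  define B where "B = {x \<in> space M. 1 \<le> ennreal (\<epsilon> / C) * X x}"
  have [measurable]: "B \<in> sets M" unfolding B_def by measurable
  have "emeasure M B \<le> ennreal (\<epsilon> / C) * (\<integral>\<^sup>+x. X x * indicator (space M) x \<partial>M)"
    unfolding B_def by (rule nn_integral_Markov_inequality) auto
  also have "\<dots> = ennreal (\<epsilon> / C) * (\<integral>\<^sup>+x. X x \<partial>M)"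
    by (intro arg_cong2[where f="(*)"] refl nn_integral_cong) simp
  also have "\<dots> \<le> ennreal (\<epsilon> / C) * ennreal C"
    using assms(3) by (rule mult_left_mono) simp
  also have "\<dots> = ennreal \<epsilon>"
    using C \<epsilon> by (simp add: ennreal_mult[symmetric])
  finally have "emeasure M B \<le> ennreal \<epsilon>" .
  then have "1 - ennreal \<epsilon> \<le> emeasure M (space M - B)"
    by (simp add: emeasure_compl emeasure_space_1 ennreal_minus_mono)
  then have "emeasure M (space M - B) \<ge> ennreal (1 - \<epsilon>)"
    using \<epsilon> by (simp add: ennreal_1[symmetric] ennreal_minus del: ennreal_1)
  moreover have "X x \<le> ennreal (C / \<epsilon>)" if "x \<in> space M - B" for x
  proof (cases "X x" rule: ennreal_cases)
    case (real y)
    then have "\<epsilon> / C * y < 1"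
      using that C \<epsilon> by (auto simp: B_def ennreal_mult[symmetric] not_le)
    then show ?thesis using real C \<epsilon> by (simp add: field_simps ennreal_leI)
  qed (use that C \<epsilon> in \<open>auto simp: B_def ennreal_mult_top\<close>)
  ultimately show ?thesis by (intro that[of "space M - B"]) auto
qed

lemma ext_integral_integrable:
  assumes "integrable M f"
  shows "ext_integral M f = ereal (\<integral>x. f x \<partial>M)"
  using assms by (rule integrableE) (simp add: ext_integral_def)

lemma ext_integral_le_integral:
  assumes "integrable M g" and "\<And>x. x \<in> space M \<Longrightarrow> f x \<le> g x"
  shows "ext_integral M f \<le> ereal (\<integral>x. g x \<partial>M)"
proof -
  have "ext_integral M f \<le> ext_integral M g"
    unfolding ext_integral_def
    using assms(2)
    by (intro ereal_minus_mono) (auto intro!: nn_integral_mono ennreal_leI simp: less_eq_ennreal.rep_eq[symmetric])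
  then show ?thesis using ext_integral_integrable[OF assms(1)] by simp
qed

lemma ext_integral_distr:
  assumes "T \<in> M \<rightarrow>\<^sub>M N" and "f \<in> borel_measurable N"
  shows "ext_integral (distr M N T) f = ext_integral M (\<lambda>x. f (T x))"
  using assms by (simp add: ext_integral_def nn_integral_distr)

section \<open>Moments of the circularly symmetric Gaussian\<close>

lemma nn_integral_inverse_1_plus_square:
  "(\<integral>\<^sup>+s. ennreal (1 / (1 + s\<^sup>2)) \<partial>lborel) = ennreal pi"
proof -
  have "integrable lborel (\<lambda>s::real. inverse (1 + s\<^sup>2))"
    using integrable_inverse_1_plus_square by (simp add: set_integrable_def)
  moreover have "(\<integral>s. inverse (1 + s\<^sup>2) \<partial>lborel) = pi"
    using LBINT_inverse_1_plus_square
    by (simp add: interval_lebesgue_integral_def set_lebesgue_integral_def)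
  ultimately show ?thesis
    by (subst nn_integral_eq_integral) (auto simp: divide_inverse add_pos_nonneg)
qed

lemma nn_integral_gaussian_even_moment:
  fixes \<rho> :: real assumes "\<rho> > 0"
  shows "(\<integral>\<^sup>+x. ennreal (x ^ (2 * j) * exp (- x\<^sup>2 / (2 * \<rho>\<^sup>2))) \<partial>lborel)
       = ennreal (sqrt (2 * pi) * \<rho> ^ (2 * j + 1) * (fact (2 * j) / (2 ^ j * fact j)))"
proof -
  have "has_bochner_integral lborel (\<lambda>x. sqrt (2 * pi * \<rho>\<^sup>2) * (normal_density 0 \<rho> x * x ^ (2 * j)))
      (sqrt (2 * pi * \<rho>\<^sup>2) * (fact (2 * j) / ((2 / \<rho>\<^sup>2) ^ j * fact j)))"
    by (rule has_bochner_integral_mult_right) (use normal_moment_even[OF assms, of 0 j] in simp)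
  moreover have "sqrt (2 * pi * \<rho>\<^sup>2) * (normal_density 0 \<rho> x * x ^ (2 * j))
      = x ^ (2 * j) * exp (- x\<^sup>2 / (2 * \<rho>\<^sup>2))" for x
    using assms by (simp add: normal_density_def)
  moreover have "sqrt (2 * pi * \<rho>\<^sup>2) * (fact (2 * j) / ((2 / \<rho>\<^sup>2) ^ j * fact j))
      = sqrt (2 * pi) * \<rho> ^ (2 * j + 1) * (fact (2 * j) / (2 ^ j * fact j))"
    using assms by (simp add: real_sqrt_mult power_divide field_simps flip: power_mult)
  ultimately have "has_bochner_integral lborel (\<lambda>x. x ^ (2 * j) * exp (- x\<^sup>2 / (2 * \<rho>\<^sup>2)))
      (sqrt (2 * pi) * \<rho> ^ (2 * j + 1) * (fact (2 * j) / (2 ^ j * fact j)))"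
    by simp
  then show ?thesis
    by (subst nn_integral_eq_integral) (auto simp: has_bochner_integral_iff zero_le_mult_iff)
qed

lemma normal_density_mult:
  fixes \<tau> :: real assumes "\<tau> > 0"
  shows "normal_density 0 \<tau> x * normal_density 0 \<tau> y = exp (- (x\<^sup>2 + y\<^sup>2) / (2 * \<tau>\<^sup>2)) / (2 * pi * \<tau>\<^sup>2)"
proof -
  have "sqrt (2 * pi * \<tau>\<^sup>2) * sqrt (2 * pi * \<tau>\<^sup>2) = 2 * pi * \<tau>\<^sup>2" by simp
  then show ?thesis
    unfolding normal_density_def by (simp add: field_simps exp_add[symmetric] diff_divide_distrib add_divide_distrib)
qed

lemma nn_integral_normal_pair_slice:
  fixes \<tau> x :: real assumes \<tau>: "\<tau> > 0" and x: "x \<noteq> 0"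
  shows "(\<integral>\<^sup>+y. ennreal (normal_density 0 \<tau> x * normal_density 0 \<tau> y
              * ((x\<^sup>2 + y\<^sup>2) ^ j / sqrt (x\<^sup>2 + y\<^sup>2))) \<partial>lborel)
       = (\<integral>\<^sup>+s. ennreal (sqrt (1 + s\<^sup>2) ^ (2 * j) / sqrt (1 + s\<^sup>2) / (2 * pi * \<tau>\<^sup>2)
              * (x ^ (2 * j) * exp (- x\<^sup>2 / (2 * (\<tau> / sqrt (1 + s\<^sup>2))\<^sup>2)))) \<partial>lborel)"
proof -
  have pt: "\<bar>x\<bar> * (normal_density 0 \<tau> x * normal_density 0 \<tau> (x * s)
             * ((x\<^sup>2 + (x * s)\<^sup>2) ^ j / sqrt (x\<^sup>2 + (x * s)\<^sup>2)))
      = sqrt (1 + s\<^sup>2) ^ (2 * j) / sqrt (1 + s\<^sup>2) / (2 * pi * \<tau>\<^sup>2)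
        * (x ^ (2 * j) * exp (- x\<^sup>2 / (2 * (\<tau> / sqrt (1 + s\<^sup>2))\<^sup>2)))" for s
  proof -
    define q where "q = sqrt (1 + s\<^sup>2)"
    have q: "q > 0" "q\<^sup>2 = 1 + s\<^sup>2"
      unfolding q_def by (auto simp: add_pos_nonneg)
    have r: "x\<^sup>2 + (x * s)\<^sup>2 = x\<^sup>2 * q\<^sup>2"
      unfolding q(2) by (simp add: algebra_simps power2_eq_square)
    have "sqrt (x\<^sup>2 + (x * s)\<^sup>2) = \<bar>x\<bar> * q"
      unfolding r using q(1) by (simp add: real_sqrt_mult)
    then show ?thesis
      unfolding normal_density_mult[OF \<tau>] r q_def[symmetric] using x q(1) \<tau>
      by (simp add: field_simps power_mult_distrib power_mult power2_eq_square)
  qed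
  have "(\<integral>\<^sup>+y. ennreal (normal_density 0 \<tau> x * normal_density 0 \<tau> y
              * ((x\<^sup>2 + y\<^sup>2) ^ j / sqrt (x\<^sup>2 + y\<^sup>2))) \<partial>lborel)
      = ennreal \<bar>x\<bar> * (\<integral>\<^sup>+s. ennreal (normal_density 0 \<tau> x * normal_density 0 \<tau> (0 + x * s)
              * ((x\<^sup>2 + (0 + x * s)\<^sup>2) ^ j / sqrt (x\<^sup>2 + (0 + x * s)\<^sup>2))) \<partial>lborel)"
    by (rule nn_integral_real_affine) (use x in auto)
  also have "\<dots> = (\<integral>\<^sup>+s. ennreal (sqrt (1 + s\<^sup>2) ^ (2 * j) / sqrt (1 + s\<^sup>2) / (2 * pi * \<tau>\<^sup>2)
              * (x ^ (2 * j) * exp (- x\<^sup>2 / (2 * (\<tau> / sqrt (1 + s\<^sup>2))\<^sup>2)))) \<partial>lborel)"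
    unfolding pt[symmetric] by (subst nn_integral_cmult[symmetric]) (auto simp: ennreal_mult[symmetric])
  finally show ?thesis .
qed

text \<open>The integrand (x^2 + y^2)^j / sqrt (x^2 + y^2) is r^(2j - 1), including 1 / r for j = 0.
  Slicing along the lines y = x s reduces the x-integral to a Gaussian moment of variance
  tau^2 / (1 + s^2), after which only the integral of 1 / (1 + s^2) remains.\<close>

lemma nn_integral_normal_pair_radial_moment:
  fixes \<tau> :: real assumes \<tau>: "\<tau> > 0"
  shows "(\<integral>\<^sup>+x. \<integral>\<^sup>+y. ennreal (normal_density 0 \<tau> x * normal_density 0 \<tau> y
              * ((x\<^sup>2 + y\<^sup>2) ^ j / sqrt (x\<^sup>2 + y\<^sup>2))) \<partial>lborel \<partial>lborel)
       = ennreal (sqrt (pi / 2) * \<tau> ^ (2 * j + 1) / \<tau>\<^sup>2 * (fact (2 * j) / (2 ^ j * fact j)))"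
proof -
  define c where "c = fact (2 * j) / (2 ^ j * fact j :: real)"
  define q where "q s = sqrt (1 + s\<^sup>2)" for s :: real
  define G where "G s = q s ^ (2 * j) / q s / (2 * pi * \<tau>\<^sup>2)" for s
  have q: "q s > 0" "(q s)\<^sup>2 = 1 + s\<^sup>2" for s
    unfolding q_def by (auto simp: add_pos_nonneg)
  have c: "c \<ge> 0" unfolding c_def by simp
  have G: "G s \<ge> 0" for s unfolding G_def using q(1)[of s] by simp
  have sqrt_2pi: "sqrt (2 * pi) = 2 * sqrt (pi / 2)"
  proof -
    have "sqrt (2 * pi) = sqrt (2\<^sup>2 * (pi / 2))" by (simp add: power2_eq_square)
    then show ?thesis by (simp only: real_sqrt_mult real_sqrt_abs)
  qed
  have "(\<integral>\<^sup>+x. \<integral>\<^sup>+y. ennreal (normal_density 0 \<tau> x * normal_density 0 \<tau> y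
              * ((x\<^sup>2 + y\<^sup>2) ^ j / sqrt (x\<^sup>2 + y\<^sup>2))) \<partial>lborel \<partial>lborel)
      = (\<integral>\<^sup>+x. \<integral>\<^sup>+s. ennreal (G s * (x ^ (2 * j) * exp (- x\<^sup>2 / (2 * (\<tau> / q s)\<^sup>2)))) \<partial>lborel \<partial>lborel)"
    unfolding G_def q_def
    by (rule nn_integral_cong_AE, rule eventually_mono[OF AE_lborel_singleton[of 0]])
       (erule nn_integral_normal_pair_slice[OF \<tau>])
  also have "\<dots> = (\<integral>\<^sup>+s. \<integral>\<^sup>+x. ennreal (G s * (x ^ (2 * j) * exp (- x\<^sup>2 / (2 * (\<tau> / q s)\<^sup>2)))) \<partial>lborel \<partial>lborel)"
    by (rule lborel_pair.Fubini') (simp add: G_def q_def)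
  also have "\<dots> = (\<integral>\<^sup>+s. ennreal (G s) * ennreal (sqrt (2 * pi) * (\<tau> / q s) ^ (2 * j + 1) * c) \<partial>lborel)"
  proof (intro nn_integral_cong)
    fix s
    have \<rho>: "\<tau> / q s > 0" using q(1)[of s] \<tau> by simp
    show "(\<integral>\<^sup>+x. ennreal (G s * (x ^ (2 * j) * exp (- x\<^sup>2 / (2 * (\<tau> / q s)\<^sup>2)))) \<partial>lborel)
        = ennreal (G s) * ennreal (sqrt (2 * pi) * (\<tau> / q s) ^ (2 * j + 1) * c)"
      unfolding c_def
      by (subst ennreal_mult'[OF G], subst nn_integral_cmult, simp,
          subst nn_integral_gaussian_even_moment[OF \<rho>], rule refl)
  qed
  also have "\<dots> = (\<integral>\<^sup>+s. ennreal (sqrt (pi / 2) * \<tau> ^ (2 * j + 1) / \<tau>\<^sup>2 * c / pi) * ennreal (1 / (1 + s\<^sup>2)) \<partial>lborel)"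
  proof (intro nn_integral_cong)
    fix s
    have "G s * (sqrt (2 * pi) * (\<tau> / q s) ^ (2 * j + 1) * c)
        = sqrt (pi / 2) * \<tau> ^ (2 * j + 1) / \<tau>\<^sup>2 * c / pi * (1 / (q s)\<^sup>2)"
      using q(1)[of s] \<tau> unfolding sqrt_2pi by (simp add: G_def power_divide field_simps power2_eq_square)
    then show "ennreal (G s) * ennreal (sqrt (2 * pi) * (\<tau> / q s) ^ (2 * j + 1) * c)
        = ennreal (sqrt (pi / 2) * \<tau> ^ (2 * j + 1) / \<tau>\<^sup>2 * c / pi) * ennreal (1 / (1 + s\<^sup>2))"
      unfolding q(2) using G[of s] q(1)[of s] \<tau> c by (simp add: ennreal_mult[symmetric])
  qed
  also have "\<dots> = ennreal (sqrt (pi / 2) * \<tau> ^ (2 * j + 1) / \<tau>\<^sup>2 * c)"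
    using \<tau> c by (subst nn_integral_cmult) (auto simp: nn_integral_inverse_1_plus_square ennreal_mult[symmetric])
  finally show ?thesis unfolding c_def .
qed

lemma sets_CN_gauss [simp, measurable_cong]: "sets (CN_gauss s2) = sets borel"
  by (simp add: CN_gauss_def)

lemma measurable_Complex_pair [measurable]:
  "(\<lambda>(x, y). Complex x y) \<in> borel_measurable (M \<Otimes>\<^sub>M N)" if "sets M = sets borel" "sets N = sets borel"
  using that unfolding Complex_eq by measurable

lemma prob_space_CN_gauss:
  assumes "s2 > 0" shows "prob_space (CN_gauss s2)"
proof -
  let ?D = "density lborel (normal_density 0 (sqrt (s2 / 2)))"
  interpret D: prob_space ?D
    using assms by (intro prob_space_normal_density) simp
  interpret DD: pair_prob_space ?D ?D ..
  show ?thesis unfolding CN_gauss_def by (rule DD.prob_space_distr) simp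
qed

lemma nn_integral_CN_gauss:
  assumes "s2 > 0" and [measurable]: "f \<in> borel_measurable borel"
  shows "(\<integral>\<^sup>+z. f z \<partial>CN_gauss s2)
       = (\<integral>\<^sup>+x. \<integral>\<^sup>+y. ennreal (normal_density 0 (sqrt (s2 / 2)) x * normal_density 0 (sqrt (s2 / 2)) y)
              * f (Complex x y) \<partial>lborel \<partial>lborel)"
proof -
  let ?\<phi> = "normal_density 0 (sqrt (s2 / 2))"
  have sf: "sigma_finite_measure (density lborel ?\<phi>)"
    using assms by (intro prob_space_imp_sigma_finite prob_space_normal_density) simp
  have "density lborel ?\<phi> \<Otimes>\<^sub>M density lborel ?\<phi>
      = density (lborel \<Otimes>\<^sub>M lborel) (\<lambda>(x, y). ennreal (?\<phi> x) * ennreal (?\<phi> y))"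
    by (rule pair_measure_density) (auto intro: sf lborel.sigma_finite_measure_axioms)
  then have "(\<integral>\<^sup>+z. f z \<partial>CN_gauss s2)
      = (\<integral>\<^sup>+p. ennreal (?\<phi> (fst p) * ?\<phi> (snd p)) * f (Complex (fst p) (snd p)) \<partial>(lborel \<Otimes>\<^sub>M lborel))"
    unfolding CN_gauss_def
    by (simp add: nn_integral_distr nn_integral_density case_prod_beta ennreal_mult)
  also have "\<dots> = (\<integral>\<^sup>+x. \<integral>\<^sup>+y. ennreal (?\<phi> x * ?\<phi> y) * f (Complex x y) \<partial>lborel \<partial>lborel)"
    by (subst lborel.nn_integral_fst[symmetric]) auto
  finally show ?thesis .
qed

lemma nn_integral_CN_gauss_radial_moment:
  assumes "s2 > 0"
  shows "(\<integral>\<^sup>+z. ennreal (cmod z ^ (2 * j) / cmod z) \<partial>CN_gauss s2)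
       = ennreal (sqrt (pi / 2) * sqrt (s2 / 2) ^ (2 * j + 1) / (s2 / 2) * (fact (2 * j) / (2 ^ j * fact j)))"
proof -
  have "(\<integral>\<^sup>+z. ennreal (cmod z ^ (2 * j) / cmod z) \<partial>CN_gauss s2)
      = (\<integral>\<^sup>+x. \<integral>\<^sup>+y. ennreal (normal_density 0 (sqrt (s2 / 2)) x * normal_density 0 (sqrt (s2 / 2)) y
              * ((x\<^sup>2 + y\<^sup>2) ^ j / sqrt (x\<^sup>2 + y\<^sup>2))) \<partial>lborel \<partial>lborel)"
    using assms
    by (simp add: nn_integral_CN_gauss complex_norm power_mult ennreal_mult[symmetric] mult.assoc)
  also have "\<dots> = ennreal (sqrt (pi / 2) * sqrt (s2 / 2) ^ (2 * j + 1) / (s2 / 2) * (fact (2 * j) / (2 ^ j * fact j)))"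
    using nn_integral_normal_pair_radial_moment[of "sqrt (s2 / 2)" j] assms by simp
  finally show ?thesis .
qed

lemma nn_integral_cmod_CN_gauss:
  assumes "s2 > 0"
  shows "(\<integral>\<^sup>+z. ennreal (cmod z) \<partial>CN_gauss s2) = ennreal (sqrt (pi * s2) / 2)"
proof -
  have "(\<integral>\<^sup>+z. ennreal (cmod z) \<partial>CN_gauss s2) = (\<integral>\<^sup>+z. ennreal (cmod z ^ (2 * 1) / cmod z) \<partial>CN_gauss s2)"
    by (intro nn_integral_cong) (auto simp: power2_eq_square)
  then show ?thesis
    using nn_integral_CN_gauss_radial_moment[OF assms, of 1] assms
    by (simp add: real_sqrt_divide real_sqrt_mult field_simps)
qed

lemma nn_integral_inverse_cmod_CN_gauss:
  assumes "s2 > 0"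
  shows "(\<integral>\<^sup>+z. ennreal (1 / cmod z) \<partial>CN_gauss s2) = ennreal (sqrt (pi / s2))"
  using nn_integral_CN_gauss_radial_moment[OF assms, of 0] assms
  by (simp add: real_sqrt_divide field_simps)

section \<open>Zero-forcing equalization over Rayleigh fading\<close>

definition bias_norm :: "real^('m::finite \<times> bool) \<Rightarrow> real" where
  "bias_norm b = (\<Sum>i\<in>UNIV. sqrt ((b $ (i, True))\<^sup>2 + (b $ (i, False))\<^sup>2))"

lemma borel_measurable_bias_norm [measurable]: "bias_norm \<in> borel_measurable borel"
  unfolding bias_norm_def by measurable

definition zero_forcing_bias :: "real \<Rightarrow> ('m \<Rightarrow> complex) \<Rightarrow> ('m \<Rightarrow> complex) \<Rightarrow> real^('m::finite \<times> bool)" where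
  "zero_forcing_bias Pw h nz =
     (\<chi> ib. (if snd ib then Re else Im) (nz (fst ib) / (complex_of_real (sqrt Pw) * h (fst ib))))"

lemma rayleigh_bias_eq_distr:
  "rayleigh_bias Pw \<sigma>0 = distr (PiM UNIV (\<lambda>_. CN_gauss 1) \<Otimes>\<^sub>M PiM UNIV (\<lambda>_. CN_gauss (\<sigma>0\<^sup>2)))
     borel (\<lambda>(h, nz). zero_forcing_bias Pw h nz)"
  by (simp add: rayleigh_bias_def zero_forcing_bias_def)

lemma measurable_zero_forcing_bias [measurable]:
  "(\<lambda>(h, nz). zero_forcing_bias Pw h nz)
     \<in> borel_measurable (PiM UNIV (\<lambda>_. CN_gauss s) \<Otimes>\<^sub>M PiM UNIV (\<lambda>_. CN_gauss s'))"
proof (rule borel_measurable_vec)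
  fix ib :: "'m::finite \<times> bool"
  show "(\<lambda>x. (case x of (h, nz) \<Rightarrow> zero_forcing_bias Pw h nz) $ ib)
      \<in> borel_measurable (PiM UNIV (\<lambda>_. CN_gauss s) \<Otimes>\<^sub>M PiM UNIV (\<lambda>_. CN_gauss s'))"
    by (cases "snd ib") (simp_all add: zero_forcing_bias_def case_prod_beta)
qed

lemma bias_norm_zero_forcing_bias:
  assumes "Pw \<ge> 0"
  shows "bias_norm (zero_forcing_bias Pw h nz) = (\<Sum>i\<in>UNIV. cmod (nz i) / (sqrt Pw * cmod (h i)))"
  using assms by (simp add: bias_norm_def zero_forcing_bias_def cmod_def[symmetric] norm_divide norm_mult)

lemma prob_space_rayleigh_bias:
  assumes "\<sigma>0 \<noteq> 0" shows "prob_space (rayleigh_bias Pw \<sigma>0)"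
proof -
  interpret pair_prob_space "PiM UNIV (\<lambda>_::'m. CN_gauss 1)" "PiM UNIV (\<lambda>_::'m. CN_gauss (\<sigma>0\<^sup>2))"
    using assms by (intro pair_prob_space.intro pair_sigma_finite.intro prob_space_PiM prob_space_CN_gauss
        prob_space_imp_sigma_finite) simp_all
  show ?thesis
    unfolding rayleigh_bias_eq_distr by (rule prob_space_distr) simp
qed

lemma nn_integral_bias_norm_rayleigh_bias:
  assumes Pw: "Pw > 0" and \<sigma>0: "\<sigma>0 > 0"
  shows "(\<integral>\<^sup>+b. ennreal (bias_norm b) \<partial>(rayleigh_bias Pw \<sigma>0 :: (real^('m::finite \<times> bool)) measure))
       = ennreal (real CARD('m) * (pi * \<sigma>0 / (2 * sqrt Pw)))"
proof -
  let ?H = "PiM UNIV (\<lambda>_::'m. CN_gauss 1)" and ?N = "PiM UNIV (\<lambda>_::'m. CN_gauss (\<sigma>0\<^sup>2))"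
  have CN: "prob_space (CN_gauss 1)" "prob_space (CN_gauss (\<sigma>0\<^sup>2))"
    using \<sigma>0 by (simp_all add: prob_space_CN_gauss)
  interpret pair_prob_space ?H ?N
    using CN by (intro pair_prob_space.intro pair_sigma_finite.intro prob_space_PiM
        prob_space_imp_sigma_finite) simp_all
  \<comment> \<open>by independence of H i and N i, each summand factorises into E (1 / cmod H) * E (cmod N)\<close>
  have summand: "(\<integral>\<^sup>+p. ennreal (cmod (snd p i) / (sqrt Pw * cmod (fst p i))) \<partial>(?H \<Otimes>\<^sub>M ?N))
      = ennreal (pi * \<sigma>0 / (2 * sqrt Pw))" for i
  proof -
    have "(\<integral>\<^sup>+p. ennreal (cmod (snd p i) / (sqrt Pw * cmod (fst p i))) \<partial>(?H \<Otimes>\<^sub>M ?N))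
        = (\<integral>\<^sup>+p. ennreal (1 / sqrt Pw) * (ennreal (1 / cmod (fst p i)) * ennreal (cmod (snd p i))) \<partial>(?H \<Otimes>\<^sub>M ?N))"
      using Pw by (intro nn_integral_cong) (simp add: ennreal_mult[symmetric])
    also have "\<dots> = ennreal (1 / sqrt Pw)
          * ((\<integral>\<^sup>+h. ennreal (1 / cmod (h i)) \<partial>?H) * (\<integral>\<^sup>+nz. ennreal (cmod (nz i)) \<partial>?N))"
      by (subst nn_integral_cmult)
         (simp_all add: nn_integral_pair_mult[of "\<lambda>h. ennreal (1 / cmod (h i))" "\<lambda>nz. ennreal (cmod (nz i))"])
    also have "\<dots> = ennreal (1 / sqrt Pw) * (ennreal (sqrt pi) * ennreal (sqrt (pi * \<sigma>0\<^sup>2) / 2))"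
      using CN \<sigma>0
      by (simp add: nn_integral_PiM_component[where f="\<lambda>z. ennreal (1 / cmod z)"]
          nn_integral_PiM_component[where f="\<lambda>z. ennreal (cmod z)"]
          nn_integral_inverse_cmod_CN_gauss nn_integral_cmod_CN_gauss)
    also have "\<dots> = ennreal (pi * \<sigma>0 / (2 * sqrt Pw))"
      using Pw \<sigma>0 by (simp add: ennreal_mult[symmetric] real_sqrt_mult mult.assoc[symmetric])
    finally show ?thesis .
  qed
  have "(\<integral>\<^sup>+b. ennreal (bias_norm b) \<partial>(rayleigh_bias Pw \<sigma>0 :: (real^('m \<times> bool)) measure))
      = (\<integral>\<^sup>+p. (\<Sum>i\<in>UNIV. ennreal (cmod (snd p i) / (sqrt Pw * cmod (fst p i)))) \<partial>(?H \<Otimes>\<^sub>M ?N))"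
    unfolding rayleigh_bias_eq_distr using Pw
    by (simp add: nn_integral_distr case_prod_beta bias_norm_zero_forcing_bias sum_ennreal)
  also have "\<dots> = (\<Sum>i\<in>(UNIV :: 'm set). ennreal (pi * \<sigma>0 / (2 * sqrt Pw)))"
    by (subst nn_integral_sum) (simp_all add: summand)
  also have "\<dots> = ennreal (real CARD('m) * (pi * \<sigma>0 / (2 * sqrt Pw)))"
    using Pw \<sigma>0 by (simp add: ennreal_of_nat_eq_real_of_nat ennreal_mult[symmetric])
  finally show ?thesis .
qed

section \<open>Kullback-Leibler divergence and change of measure\<close>

lemma KL_div_eq_integral:
  assumes Q: "prob_space Q" and sets: "sets P = sets Q"
    and KL: "KL_div P Q \<noteq> \<infinity>"
  shows "integrable P (\<lambda>x. ln (enn2real (RN_deriv Q P x)))"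
    and "KL_div P Q = ereal (\<integral>x. ln (enn2real (RN_deriv Q P x)) \<partial>P)"
proof -
  interpret Q: prob_space Q by (rule Q)
  define D where "D = RN_deriv Q P"
  define p where "p x = enn2real (D x)" for x
  have ac: "absolutely_continuous Q P"
    using KL unfolding KL_div_def by (auto split: if_splits)
  have P_eq: "P = density Q D"
    unfolding D_def using Q.density_RN_deriv[OF ac sets] by simp
  have [measurable]: "D \<in> borel_measurable Q" unfolding D_def by simp
  have meas: "(\<lambda>x. ln (p x)) \<in> borel_measurable P"
    unfolding measurable_cong_sets[OF sets refl] p_def by measurable
  \<comment> \<open>the negative part is integrable: ln (1 / p) \<le> 1 / p, and 1 / p has P-integral at most 1\<close>
  have "ennreal (- ln (p x)) \<le> ennreal (1 / p x)" for x
  proof (cases "p x > 0")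
    case True
    then have "- ln (p x) \<le> 1 / p x - 1"
      using ln_le_minus_one[of "1 / p x"] by (simp add: ln_div)
    then show ?thesis by (intro ennreal_leI) simp
  qed (use enn2real_nonneg[of "D x"] in \<open>simp add: p_def less_le\<close>)
  then have "(\<integral>\<^sup>+x. ennreal (- ln (p x)) \<partial>P) \<le> (\<integral>\<^sup>+x. ennreal (1 / p x) \<partial>P)"
    by (intro nn_integral_mono)
  also have "\<dots> = (\<integral>\<^sup>+x. D x * ennreal (1 / p x) \<partial>Q)"
    unfolding P_eq by (rule nn_integral_density) (auto simp: p_def)
  also have "\<dots> \<le> (\<integral>\<^sup>+x. 1 \<partial>Q)"
  proof (intro nn_integral_mono)
    fix x show "D x * ennreal (1 / p x) \<le> 1"
      by (cases "D x" rule: ennreal_cases) (auto simp: p_def ennreal_mult[symmetric] divide_le_eq_1)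
  qed
  finally have neg: "(\<integral>\<^sup>+x. ennreal (- ln (p x)) \<partial>P) \<noteq> \<infinity>"
    using Q.emeasure_space_1 by (auto simp: top_unique)
  have KL_eq: "KL_div P Q = ext_integral P (\<lambda>x. ln (p x))"
    using ac unfolding KL_div_def p_def D_def by simp
  then have "(\<integral>\<^sup>+x. ennreal (ln (p x)) \<partial>P) \<noteq> \<infinity>"
    using KL by (auto simp: ext_integral_def)
  then have int: "integrable P (\<lambda>x. ln (p x))"
    using meas neg by (simp add: real_integrable_def)
  then show "integrable P (\<lambda>x. ln (enn2real (RN_deriv Q P x)))"
    by (simp add: p_def D_def)
  show "KL_div P Q = ereal (\<integral>x. ln (enn2real (RN_deriv Q P x)) \<partial>P)"
    using KL_eq ext_integral_integrable[OF int] by (simp add: p_def D_def)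
qed

lemma AE_RN_deriv_pos:
  assumes Q: "prob_space Q" and P: "prob_space P" and sets: "sets P = sets Q"
    and ac: "absolutely_continuous Q P"
  shows "AE x in P. enn2real (RN_deriv Q P x) > 0"
proof -
  interpret Q: prob_space Q by (rule Q)
  interpret P: prob_space P by (rule P)
  define D where "D = RN_deriv Q P"
  have P_eq: "P = density Q D"
    unfolding D_def using Q.density_RN_deriv[OF ac sets] by simp
  have [measurable]: "D \<in> borel_measurable Q" unfolding D_def by simp
  have "AE x in Q. D x \<noteq> \<infinity>"
    unfolding D_def by (rule Q.RN_deriv_finite[OF P.sigma_finite_measure_axioms ac sets])
  then have "AE x in P. enn2real (D x) > 0"
    unfolding P_eq by (subst AE_density) (auto elim!: eventually_mono simp: enn2real_positive_iff less_top)
  then show ?thesis by (simp add: D_def)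
qed

lemma integral_exp_div_RN_deriv_le:
  assumes Q: "prob_space Q" and sets: "sets P = sets Q"
    and ac: "absolutely_continuous Q P" and [measurable]: "f \<in> borel_measurable Q" and c: "c > 0"
    and mgf: "(\<integral>\<^sup>+x. ennreal (exp (f x)) \<partial>Q) \<le> ennreal c"
  shows "integrable P (\<lambda>x. exp (f x) / (enn2real (RN_deriv Q P x) * c))"
    and "(\<integral>x. exp (f x) / (enn2real (RN_deriv Q P x) * c) \<partial>P) \<le> 1"
proof -
  interpret Q: prob_space Q by (rule Q)
  define D where "D = RN_deriv Q P"
  define q where "q x = exp (f x) / (enn2real (D x) * c)" for x
  have P_eq: "P = density Q D"
    unfolding D_def using Q.density_RN_deriv[OF ac sets] by simp
  have [measurable]: "D \<in> borel_measurable Q" unfolding D_def by simp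
  have [measurable]: "q \<in> borel_measurable Q" unfolding q_def by measurable
  have "(\<integral>\<^sup>+x. ennreal (q x) \<partial>P) = (\<integral>\<^sup>+x. D x * ennreal (q x) \<partial>Q)"
    unfolding P_eq by (rule nn_integral_density) auto
  also have "\<dots> \<le> (\<integral>\<^sup>+x. ennreal (exp (f x)) * ennreal (1 / c) \<partial>Q)"
  proof (intro nn_integral_mono)
    fix x show "D x * ennreal (q x) \<le> ennreal (exp (f x)) * ennreal (1 / c)"
      using c by (cases "D x" rule: ennreal_cases) (auto simp: q_def ennreal_mult[symmetric])
  qed
  also have "\<dots> \<le> 1"
    using mgf c by (subst nn_integral_multc) (auto simp: ennreal_mult[symmetric] intro: order_trans[OF mult_right_mono])
  finally have q_le: "(\<integral>\<^sup>+x. ennreal (q x) \<partial>P) \<le> 1" .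
  have q_nonneg: "q x \<ge> 0" for x using c by (simp add: q_def)
  have int_q: "integrable P q"
    using q_le q_nonneg
    by (intro integrableI_nonneg) (auto simp: measurable_cong_sets[OF sets refl] intro: le_less_trans)
  moreover have "(\<integral>x. q x \<partial>P) \<le> 1"
    using q_le q_nonneg int_q by (simp add: integral_eq_nn_integral enn2real_leI)
  ultimately show "integrable P (\<lambda>x. exp (f x) / (enn2real (RN_deriv Q P x) * c))"
    and "(\<integral>x. exp (f x) / (enn2real (RN_deriv Q P x) * c) \<partial>P) \<le> 1"
    by (simp_all add: q_def[abs_def] D_def)
qed

text \<open>f need not be P-integrable, so the change of measure is stated for an integrable majorant of f.\<close>

lemma donsker_varadhan_majorant:
  assumes Q: "prob_space Q" and P: "prob_space P" and sets: "sets P = sets Q"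
    and f [measurable]: "f \<in> borel_measurable Q" and c: "c > 0"
    and mgf: "(\<integral>\<^sup>+x. ennreal (exp (f x)) \<partial>Q) \<le> ennreal c"
    and KL: "KL_div P Q \<noteq> \<infinity>"
  obtains r where "integrable P r" and "\<And>x. f x \<le> r x"
    and "ereal (\<integral>x. r x \<partial>P) \<le> KL_div P Q + ereal (ln c)"
proof -
  interpret P: prob_space P by (rule P)
  define p where "p x = enn2real (RN_deriv Q P x)" for x
  define q where "q x = exp (f x) / (p x * c)" for x
  define r where "r x = max (f x) (ln (p x) + ln c + q x - 1)" for x
  have ac: "absolutely_continuous Q P"
    using KL unfolding KL_div_def by (auto split: if_splits)
  have int_ln: "integrable P (\<lambda>x. ln (p x))" and KL_eq: "KL_div P Q = ereal (\<integral>x. ln (p x) \<partial>P)"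
    using KL_div_eq_integral[OF Q sets KL] by (simp_all add: p_def)
  have int_q: "integrable P q" and "(\<integral>x. q x \<partial>P) \<le> 1"
    using integral_exp_div_RN_deriv_le[OF Q sets ac f c mgf] unfolding q_def p_def by simp_all
  \<comment> \<open>where p > 0, f - ln p - ln c = ln q \<le> q - 1\<close>
  have AE_r: "AE x in P. r x = ln (p x) + ln c + q x - 1"
    using AE_RN_deriv_pos[OF Q P sets ac]
  proof eventually_elim
    case (elim x)
    have "f x - ln (p x) - ln c = ln (q x)"
      using elim c by (simp add: p_def q_def ln_div ln_mult)
    also have "\<dots> \<le> q x - 1"
      using elim c by (intro ln_le_minus_one) (simp add: p_def q_def)
    finally show ?case by (simp add: r_def)
  qed
  have [measurable]: "p \<in> borel_measurable Q" unfolding p_def by measurable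
  have [measurable]: "q \<in> borel_measurable Q" unfolding q_def by measurable
  have meas_r0: "(\<lambda>x. ln (p x) + ln c + q x - 1) \<in> borel_measurable Q"
    by measurable
  have meas_r: "r \<in> borel_measurable P" "(\<lambda>x. ln (p x) + ln c + q x - 1) \<in> borel_measurable P"
    unfolding measurable_cong_sets[OF sets refl] r_def using meas_r0 by (auto intro: borel_measurable_max)
  have "(\<integral>x. r x \<partial>P) = (\<integral>x. ln (p x) \<partial>P) + ln c + (\<integral>x. q x \<partial>P) - 1"
    using integral_cong_AE[OF meas_r AE_r] int_ln int_q by (simp add: P.prob_space)
  with \<open>(\<integral>x. q x \<partial>P) \<le> 1\<close> show ?thesis
    using integrable_cong_AE[OF meas_r AE_r] int_ln int_q KL_eq by (intro that) (auto simp: r_def)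
qed

section \<open>Concentration of the empirical risk\<close>

lemma nn_integral_exp_generalization_gap_le:
  fixes l :: "'w \<Rightarrow> 'z \<Rightarrow> real"
  assumes PZ: "prob_space PZ" and n: "n > 0" and subg: "sub_gaussian_loss PZ l \<sigma>"
    and [measurable]: "l w \<in> borel_measurable PZ"
  shows "(\<integral>\<^sup>+S. ennreal (exp (k * (pop_risk PZ l w - emp_risk l n S w))) \<partial>sample_space PZ n)
       \<le> ennreal (exp (k\<^sup>2 * \<sigma>\<^sup>2 / (2 * real n)))"
proof -
  interpret PZ: prob_space PZ by (rule PZ)
  interpret product_sigma_finite "\<lambda>_::nat. PZ"
    by (simp add: product_sigma_finite_def PZ.sigma_finite_measure_axioms)
  define t where "t = - k / real n"
  define E where "E = (\<integral>z. exp (t * (l w z - pop_risk PZ l w)) \<partial>PZ)"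
  have "exp (k * (pop_risk PZ l w - emp_risk l n S w)) = (\<Prod>i<n. exp (t * (l w (S i) - pop_risk PZ l w)))" for S
  proof -
    have "(\<Sum>i<n. t * (l w (S i) - pop_risk PZ l w)) = t * ((\<Sum>i<n. l w (S i)) - real n * pop_risk PZ l w)"
      by (simp add: sum_distrib_left[symmetric] sum_subtractf)
    also have "\<dots> = k * (pop_risk PZ l w - emp_risk l n S w)"
      using n by (simp add: t_def emp_risk_def field_simps)
    finally show ?thesis by (simp add: exp_sum[symmetric])
  qed
  then have "(\<integral>\<^sup>+S. ennreal (exp (k * (pop_risk PZ l w - emp_risk l n S w))) \<partial>sample_space PZ n)
      = (\<integral>\<^sup>+S. (\<Prod>i<n. ennreal (exp (t * (l w (S i) - pop_risk PZ l w)))) \<partial>PiM {..<n} (\<lambda>_. PZ))"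
    unfolding sample_space_def by (simp add: prod_ennreal)
  also have "\<dots> = (\<Prod>i<n. \<integral>\<^sup>+z. ennreal (exp (t * (l w z - pop_risk PZ l w))) \<partial>PZ)"
    by (rule product_nn_integral_prod) simp_all
  also have "\<dots> = ennreal (E ^ n)"
    using subg by (simp add: E_def sub_gaussian_loss_def pop_risk_def nn_integral_eq_integral ennreal_power)
  also have "\<dots> \<le> ennreal (exp (t\<^sup>2 * \<sigma>\<^sup>2 / 2) ^ n)"
  proof (intro ennreal_leI power_mono)
    have "ln E \<le> t\<^sup>2 * \<sigma>\<^sup>2 / 2"
      using subg by (simp add: E_def sub_gaussian_loss_def pop_risk_def)
    show "E \<le> exp (t\<^sup>2 * \<sigma>\<^sup>2 / 2)"
    proof (cases "E > 0")
      case True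
      with \<open>ln E \<le> t\<^sup>2 * \<sigma>\<^sup>2 / 2\<close> show ?thesis by (simp flip: ln_le_cancel_iff)
    next
      case False
      with exp_gt_zero[of "t\<^sup>2 * \<sigma>\<^sup>2 / 2"] show ?thesis by linarith
    qed
  qed (simp add: E_def)
  also have "exp (t\<^sup>2 * \<sigma>\<^sup>2 / 2) ^ n = exp (k\<^sup>2 * \<sigma>\<^sup>2 / (2 * real n))"
    using n by (simp add: t_def exp_of_nat_mult[symmetric] power2_eq_square field_simps)
  finally show ?thesis .
qed

lemma pac_bayes_sample_set:
  fixes l :: "'w \<Rightarrow> 'z \<Rightarrow> real"
  assumes PZ: "prob_space PZ" and n: "n > 0" and subg: "sub_gaussian_loss PZ l \<sigma>"
    and [measurable]: "(\<lambda>(w, z). l w z) \<in> borel_measurable (Mw \<Otimes>\<^sub>M PZ)"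
    and Q: "Q \<in> space (prob_algebra Mw)" and \<epsilon>: "\<epsilon> > 0"
  obtains A where "A \<in> sets (sample_space PZ n)" and "emeasure (sample_space PZ n) A \<ge> ennreal (1 - \<epsilon>)"
    and "\<And>S. S \<in> A \<Longrightarrow> (\<integral>\<^sup>+w. ennreal (exp (k * (pop_risk PZ l w - emp_risk l n S w))) \<partial>Q)
                        \<le> ennreal (exp (k\<^sup>2 * \<sigma>\<^sup>2 / (2 * real n)) / \<epsilon>)"
proof -
  let ?SS = "sample_space PZ n" and ?C = "exp (k\<^sup>2 * \<sigma>\<^sup>2 / (2 * real n))"
  interpret PZ: prob_space PZ by (rule PZ)
  interpret SS: prob_space ?SS unfolding sample_space_def by (intro prob_space_PiM PZ)
  have sets_Q [measurable_cong]: "sets Q = sets Mw" and "prob_space Q"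
    using Q by (auto simp: space_prob_algebra)
  interpret Q: prob_space Q by fact
  interpret SQ: pair_prob_space ?SS Q ..
  define F where "F S w = ennreal (exp (k * (pop_risk PZ l w - emp_risk l n S w)))" for S w
  have [measurable]: "pop_risk PZ l \<in> borel_measurable Mw"
    unfolding pop_risk_def[abs_def] by (rule PZ.borel_measurable_lebesgue_integral) simp
  have [measurable]: "(\<lambda>(S, w). emp_risk l n S w) \<in> borel_measurable (?SS \<Otimes>\<^sub>M Mw)"
    unfolding emp_risk_def sample_space_def by measurable
  have F_meas: "(\<lambda>(S, w). F S w) \<in> borel_measurable (?SS \<Otimes>\<^sub>M Q)"
    unfolding F_def by measurable
  have "(\<integral>\<^sup>+S. \<integral>\<^sup>+w. F S w \<partial>Q \<partial>?SS) = (\<integral>\<^sup>+w. \<integral>\<^sup>+S. F S w \<partial>?SS \<partial>Q)"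
    using SQ.Fubini'[OF F_meas] by simp
  also have "\<dots> \<le> (\<integral>\<^sup>+w. ennreal ?C \<partial>Q)"
  proof (intro nn_integral_mono)
    fix w assume "w \<in> space Q"
    then have "l w \<in> borel_measurable PZ"
      by (simp add: sets_eq_imp_space_eq[OF sets_Q])
    then show "(\<integral>\<^sup>+S. F S w \<partial>?SS) \<le> ennreal ?C"
      unfolding F_def by (rule nn_integral_exp_generalization_gap_le[OF PZ n subg])
  qed
  finally have "(\<integral>\<^sup>+S. \<integral>\<^sup>+w. F S w \<partial>Q \<partial>?SS) \<le> ennreal ?C"
    by (simp add: Q.emeasure_space_1)
  moreover have "(\<lambda>S. \<integral>\<^sup>+w. F S w \<partial>Q) \<in> borel_measurable ?SS"
    using Q.borel_measurable_nn_integral[OF F_meas] by simp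
  ultimately obtain A where "A \<in> sets ?SS" "emeasure ?SS A \<ge> ennreal (1 - \<epsilon>)"
    "\<And>S. S \<in> A \<Longrightarrow> (\<integral>\<^sup>+w. F S w \<partial>Q) \<le> ennreal (?C / \<epsilon>)"
    using SS.Markov_high_probability_set[OF _ exp_gt_zero _ \<epsilon>] by blast
  then show ?thesis unfolding F_def by (rule that)
qed

section \<open>Generalization error of the deployed network\<close>

lemma pop_risk_le_lipschitz:
  assumes "prob_space PZ" and "lipschitz_loss dd loss K"
    and "integrable PZ (loss w)" and "integrable PZ (loss w')"
  shows "pop_risk PZ loss w' \<le> pop_risk PZ loss w + K * dd w' w"
proof -
  interpret prob_space PZ by fact
  have "\<bar>loss w' z - loss w z\<bar> \<le> K * dd w' w" for z
    using assms(2) unfolding lipschitz_loss_def by blast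
  then have "loss w' z \<le> loss w z + K * dd w' w" for z
    by (simp add: abs_le_iff diff_le_eq add.commute)
  then have "pop_risk PZ loss w' \<le> (\<integral>z. loss w z + K * dd w' w \<partial>PZ)"
    unfolding pop_risk_def using assms(3,4) by (intro integral_mono) auto
  also have "\<dots> = pop_risk PZ loss w + K * dd w' w"
    unfolding pop_risk_def using assms(3) by (simp add: prob_space)
  finally show ?thesis .
qed

lemma full_metric_bias:
  assumes "is_metric dW" and "is_metric dM"
  shows "full_metric dW dM (w, (M, b)) (w, (M, 0)) = bias_norm b"
proof -
  have "dW w w = 0" "dM M M = 0"
    using assms unfolding is_metric_def by blast+
  then show ?thesis by (simp add: full_metric_def chan_metric_def bias_norm_def)
qed

definition channel_free :: "'w \<Rightarrow> ('w, 'm::finite) fullw" where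
  "channel_free w = (w, (mat 1, 0))"

lemma measurable_channel_free [measurable]: "channel_free \<in> Mw \<rightarrow>\<^sub>M full_space Mw"
  unfolding channel_free_def full_space_def by measurable

locale wireless_setting =
  fixes PZ :: "'z measure" and Mw :: "'w measure" and dW :: "'w \<Rightarrow> 'w \<Rightarrow> real"
    and dM :: "real^('m::finite \<times> bool)^('m \<times> bool) \<Rightarrow> real^('m \<times> bool)^('m \<times> bool) \<Rightarrow> real"
    and loss :: "('w, 'm) fullw \<Rightarrow> 'z \<Rightarrow> real"
    and \<sigma> K Pw \<sigma>0 :: real
  assumes PZ: "prob_space PZ"
    and loss_meas: "(\<lambda>(w, z). loss w z) \<in> borel_measurable (full_space Mw \<Otimes>\<^sub>M PZ)"
    and subg: "sub_gaussian_loss PZ loss \<sigma>"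
    and lip: "lipschitz_loss (full_metric dW dM) loss K"
    and dW: "is_metric dW" and dM: "is_metric dM"
    and Pw: "Pw > 0" and \<sigma>0: "\<sigma>0 > 0"
begin

sublocale PZ: prob_space PZ by (rule PZ)

lemma integrable_loss: "integrable PZ (loss w)"
  using subg unfolding sub_gaussian_loss_def by blast

lemma borel_measurable_pop_risk [measurable]: "pop_risk PZ loss \<in> borel_measurable (full_space Mw)"
  unfolding pop_risk_def[abs_def] using loss_meas by (rule PZ.borel_measurable_lebesgue_integral)

lemma borel_measurable_emp_risk:
  "(\<And>i. i < n \<Longrightarrow> S i \<in> space PZ) \<Longrightarrow> emp_risk loss n S \<in> borel_measurable (full_space Mw)"
  unfolding emp_risk_def[abs_def] using loss_meas by measurable

lemma wireless_gen_err_le_majorant: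
  assumes P: "prob_space P" "sets P = sets Mw" and S: "\<And>i. i < n \<Longrightarrow> S i \<in> space PZ"
    and r: "integrable P r" "\<And>w. pop_risk PZ loss (channel_free w) - emp_risk loss n S (channel_free w) \<le> r w"
  shows "wireless_gen_err PZ loss n S Mw P Pw \<sigma>0
       \<le> ereal ((\<integral>w. r w \<partial>P) + K * (real CARD('m) * (pi * \<sigma>0 / (2 * sqrt Pw))))"
proof -
  let ?\<rho> = "rayleigh_bias Pw \<sigma>0 :: (real^('m \<times> bool)) measure"
  interpret pair_prob_space P ?\<rho>
    using P(1) \<sigma>0 by (intro pair_prob_space.intro pair_sigma_finite.intro prob_space_imp_sigma_finite
        prob_space_rayleigh_bias) simp_all
  have sets_\<rho>: "sets ?\<rho> = sets borel" by (simp add: rayleigh_bias_def)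
  have "has_bochner_integral ?\<rho> (\<lambda>b. K * bias_norm b) (K * (real CARD('m) * (pi * \<sigma>0 / (2 * sqrt Pw))))"
    using Pw \<sigma>0 nn_integral_bias_norm_rayleigh_bias[OF Pw \<sigma>0, where 'm='m]
    by (intro has_bochner_integral_mult_right has_bochner_integral_nn_integral)
       (auto simp: measurable_cong_sets[OF sets_\<rho> refl] bias_norm_def intro!: sum_nonneg)
  then have E: "integrable ?\<rho> (\<lambda>b. K * bias_norm b)"
    "(\<integral>b. K * bias_norm b \<partial>?\<rho>) = K * (real CARD('m) * (pi * \<sigma>0 / (2 * sqrt Pw)))"
    by (auto simp: has_bochner_integral_iff)
  have [measurable]: "emp_risk loss n S \<in> borel_measurable (full_space Mw)"
    using S by (rule borel_measurable_emp_risk)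
  have [measurable_cong]: "sets P = sets Mw" "sets ?\<rho> = sets borel"
    using P(2) sets_\<rho> .
  have "(\<lambda>(w, b). ((w, (mat 1, b)), channel_free w)) \<in> P \<Otimes>\<^sub>M ?\<rho> \<rightarrow>\<^sub>M full_space Mw \<Otimes>\<^sub>M full_space Mw"
    unfolding full_space_def channel_free_def by measurable
  then have "wireless_gen_err PZ loss n S Mw P Pw \<sigma>0
      = ext_integral (P \<Otimes>\<^sub>M ?\<rho>)
          (\<lambda>p. pop_risk PZ loss (fst p, (mat 1, snd p)) - emp_risk loss n S (channel_free (fst p)))"
    unfolding wireless_gen_err_def joint_deploy_def channel_free_def
    by (subst ext_integral_distr) (auto simp: case_prod_beta)
  also have "\<dots> \<le> ereal (\<integral>p. r (fst p) + K * bias_norm (snd p) \<partial>(P \<Otimes>\<^sub>M ?\<rho>))"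
  proof (rule ext_integral_le_integral)
    show "integrable (P \<Otimes>\<^sub>M ?\<rho>) (\<lambda>p. r (fst p) + K * bias_norm (snd p))"
      using integrable_add_fst_snd(1)[OF r(1) E(1)] .
    fix p :: "'w \<times> (real^('m \<times> bool))"
    have "pop_risk PZ loss (fst p, (mat 1, snd p)) \<le> pop_risk PZ loss (channel_free (fst p)) + K * bias_norm (snd p)"
      using pop_risk_le_lipschitz[OF PZ lip integrable_loss integrable_loss,
          where w="channel_free (fst p)" and w'="(fst p, (mat 1, snd p))"] full_metric_bias[OF dW dM]
      by (simp add: channel_free_def)
    then show "pop_risk PZ loss (fst p, (mat 1, snd p)) - emp_risk loss n S (channel_free (fst p))
        \<le> r (fst p) + K * bias_norm (snd p)"
      using r(2)[of "fst p"] by simp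
  qed
  also have "\<dots> = ereal ((\<integral>w. r w \<partial>P) + K * (real CARD('m) * (pi * \<sigma>0 / (2 * sqrt Pw))))"
    using integrable_add_fst_snd(2)[OF r(1) E(1)] E(2) by simp
  finally show ?thesis .
qed

lemma wireless_gen_err_le_KL_div:
  assumes P: "prob_space P" "sets P = sets Mw" and Q: "prob_space Q" "sets Q = sets Mw"
    and S: "\<And>i. i < n \<Longrightarrow> S i \<in> space PZ" and k: "k > 0" and c: "c > 0"
    and mgf: "(\<integral>\<^sup>+w. ennreal (exp (k * (pop_risk PZ loss (channel_free w) - emp_risk loss n S (channel_free w)))) \<partial>Q)
              \<le> ennreal c"
  shows "wireless_gen_err PZ loss n S Mw P Pw \<sigma>0
       \<le> (KL_div P Q + ereal (ln c)) / ereal k + ereal (real (2 * CARD('m)) * pi * K / (4 * sqrt (Pw / \<sigma>0\<^sup>2)))"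
proof (cases "KL_div P Q = \<infinity>")
  case True
  with k show ?thesis by simp
next
  case False
  define gap where "gap w = pop_risk PZ loss (channel_free w) - emp_risk loss n S (channel_free w)" for w
  have [measurable]: "emp_risk loss n S \<in> borel_measurable (full_space Mw)"
    using S by (rule borel_measurable_emp_risk)
  have "(\<lambda>w. k * gap w) \<in> borel_measurable Q"
    unfolding gap_def measurable_cong_sets[OF Q(2) refl] by measurable
  then obtain r where r: "integrable P r" "\<And>w. k * gap w \<le> r w"
    and KL: "ereal (\<integral>w. r w \<partial>P) \<le> KL_div P Q + ereal (ln c)"
    using donsker_varadhan_majorant[OF Q(1) P(1) _ _ c mgf[folded gap_def] False] P(2) Q(2) by auto
  have "wireless_gen_err PZ loss n S Mw P Pw \<sigma>0
      \<le> ereal ((\<integral>w. r w / k \<partial>P) + K * (real CARD('m) * (pi * \<sigma>0 / (2 * sqrt Pw))))"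
  proof (rule wireless_gen_err_le_majorant[OF P S])
    show "integrable P (\<lambda>w. r w / k)" using r(1) by simp
    show "pop_risk PZ loss (channel_free w) - emp_risk loss n S (channel_free w) \<le> r w / k" for w
      using r(2)[of w] k by (simp add: gap_def pos_le_divide_eq mult.commute)
  qed
  also have "\<dots> = ereal (\<integral>w. r w \<partial>P) / ereal k + ereal (real (2 * CARD('m)) * pi * K / (4 * sqrt (Pw / \<sigma>0\<^sup>2)))"
  proof -
    have "sqrt (Pw / \<sigma>0\<^sup>2) = sqrt Pw / \<sigma>0"
      using \<sigma>0 by (simp add: real_sqrt_divide)
    then have "K * (real CARD('m) * (pi * \<sigma>0 / (2 * sqrt Pw))) = real (2 * CARD('m)) * pi * K / (4 * sqrt (Pw / \<sigma>0\<^sup>2))"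
      using \<sigma>0 by simp
    then show ?thesis using k by simp
  qed
  also have "\<dots> \<le> (KL_div P Q + ereal (ln c)) / ereal k + ereal (real (2 * CARD('m)) * pi * K / (4 * sqrt (Pw / \<sigma>0\<^sup>2)))"
    using KL k by (intro add_right_mono ereal_divide_right_mono) simp_all
  finally show ?thesis .
qed

lemma wireless_gen_err_high_probability:
  assumes n: "n > 0" and alg: "PWS \<in> sample_space PZ n \<rightarrow>\<^sub>M prob_algebra Mw"
    and Q: "Q \<in> space (prob_algebra Mw)" and k: "k > 0" and \<epsilon>: "\<epsilon> > 0"
  obtains A where "A \<in> sets (sample_space PZ n)" and "emeasure (sample_space PZ n) A \<ge> ennreal (1 - \<epsilon>)"
    and "\<And>S. S \<in> A \<Longrightarrow> wireless_gen_err PZ loss n S Mw (PWS S) Pw \<sigma>0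
        \<le> (KL_div (PWS S) Q + ereal (ln (exp (k\<^sup>2 * \<sigma>\<^sup>2 / (2 * real n)) / \<epsilon>))) / ereal k
          + ereal (real (2 * CARD('m)) * pi * K / (4 * sqrt (Pw / \<sigma>0\<^sup>2)))"
proof -
  have "sub_gaussian_loss PZ (\<lambda>w. loss (channel_free w)) \<sigma>"
    using subg unfolding sub_gaussian_loss_def by blast
  moreover have "(\<lambda>(w, z). loss (channel_free w) z) \<in> borel_measurable (Mw \<Otimes>\<^sub>M PZ)"
    using loss_meas by measurable
  ultimately obtain A where A: "A \<in> sets (sample_space PZ n)" "emeasure (sample_space PZ n) A \<ge> ennreal (1 - \<epsilon>)"
    and mgf: "\<And>S. S \<in> A \<Longrightarrow> (\<integral>\<^sup>+w. ennreal (exp (k * (pop_risk PZ loss (channel_free w)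
                 - emp_risk loss n S (channel_free w)))) \<partial>Q) \<le> ennreal (exp (k\<^sup>2 * \<sigma>\<^sup>2 / (2 * real n)) / \<epsilon>)"
    using pac_bayes_sample_set[OF PZ n _ _ Q \<epsilon>, of "\<lambda>w. loss (channel_free w)" \<sigma> k]
    by (auto simp: pop_risk_def emp_risk_def)
  show ?thesis
  proof (rule that[OF A])
    fix S assume S: "S \<in> A"
    then have "S \<in> space (sample_space PZ n)"
      using A(1) sets.sets_into_space by blast
    then have "\<And>i. i < n \<Longrightarrow> S i \<in> space PZ" and "PWS S \<in> space (prob_algebra Mw)"
      using measurable_space[OF alg] by (auto simp: sample_space_def space_PiM)
    then show "wireless_gen_err PZ loss n S Mw (PWS S) Pw \<sigma>0
        \<le> (KL_div (PWS S) Q + ereal (ln (exp (k\<^sup>2 * \<sigma>\<^sup>2 / (2 * real n)) / \<epsilon>))) / ereal k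
          + ereal (real (2 * CARD('m)) * pi * K / (4 * sqrt (Pw / \<sigma>0\<^sup>2)))"
      using Q k \<epsilon> mgf[OF S] by (intro wireless_gen_err_le_KL_div) (auto simp: space_prob_algebra)
  qed
qed

end

theorem mainTheorem4:
  fixes PZ :: "'z measure" and n :: nat
    and Mw :: "'w measure" and dW :: "'w \<Rightarrow> 'w \<Rightarrow> real"
    and dM :: "real^('m::finite \<times> bool)^('m \<times> bool) \<Rightarrow> real^('m \<times> bool)^('m \<times> bool) \<Rightarrow> real"
    and loss :: "('w, 'm) fullw \<Rightarrow> 'z \<Rightarrow> real"
    and PWS :: "(nat \<Rightarrow> 'z) \<Rightarrow> 'w measure"
    and \<sigma> K Pw \<sigma>0 :: real
  assumes PZ: "prob_space PZ" and n: "n > 0"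
    and alg: "PWS \<in> measurable (sample_space PZ n) (prob_algebra Mw)"
    and dW: "is_metric dW" and dM: "is_metric dM"
    and loss_meas: "(\<lambda>(w, z). loss w z) \<in> borel_measurable (full_space Mw \<Otimes>\<^sub>M PZ)"
    and loss_nonneg: "\<And>w z. loss w z \<ge> 0"
    and subg: "sub_gaussian_loss PZ loss \<sigma>"
    and lip: "lipschitz_loss (full_metric dW dM) loss K"
    and Pw: "Pw > 0" and \<sigma>0: "\<sigma>0 > 0"
  shows "\<forall>Q \<in> space (prob_algebra Mw). \<forall>k > 0. \<forall>\<epsilon>. 0 < \<epsilon> \<and> \<epsilon> < 1 \<longrightarrow>
    (\<exists>A \<in> sets (sample_space PZ n).
       emeasure (sample_space PZ n) A \<ge> ennreal (1 - \<epsilon>) \<and>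
       (\<forall>S \<in> A.
          wireless_gen_err PZ loss n S Mw (PWS S) Pw \<sigma>0
          \<le> ereal (k * \<sigma>\<^sup>2 / (2 * real n))
            + (KL_div (PWS S) Q - ereal (ln \<epsilon>)) / ereal k
            + ereal (real (2 * CARD('m)) * pi * K / (4 * sqrt (Pw / \<sigma>0\<^sup>2))
                     + real (2 * CARD('m)) / (2 * k) * ln (pi\<^sup>2 / 8))))"
proof (intro ballI allI impI)
  fix Q and k \<epsilon> :: real
  assume Q: "Q \<in> space (prob_algebra Mw)" and k: "k > 0" and \<epsilon>: "0 < \<epsilon> \<and> \<epsilon> < 1"
  interpret wireless_setting PZ Mw dW dM loss \<sigma> K Pw \<sigma>0
    using PZ loss_meas subg lip dW dM Pw \<sigma>0 by (rule wireless_setting.intro)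
  let ?C = "exp (k\<^sup>2 * \<sigma>\<^sup>2 / (2 * real n))"
    and ?bias = "real (2 * CARD('m)) * pi * K / (4 * sqrt (Pw / \<sigma>0\<^sup>2))"
    and ?slack = "real (2 * CARD('m)) / (2 * k) * ln (pi\<^sup>2 / 8)"
  obtain A where A: "A \<in> sets (sample_space PZ n)" "emeasure (sample_space PZ n) A \<ge> ennreal (1 - \<epsilon>)"
    and bound: "\<And>S. S \<in> A \<Longrightarrow> wireless_gen_err PZ loss n S Mw (PWS S) Pw \<sigma>0
                  \<le> (KL_div (PWS S) Q + ereal (ln (?C / \<epsilon>))) / ereal k + ereal ?bias"
    using wireless_gen_err_high_probability[OF n alg Q k] \<epsilon> by blast
  have split: "(x + ereal (ln (?C / \<epsilon>))) / ereal k = ereal (k * \<sigma>\<^sup>2 / (2 * real n)) + (x - ereal (ln \<epsilon>)) / ereal k"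
    for x :: ereal
    using k \<epsilon> n by (cases x) (simp_all add: ln_div field_simps power2_eq_square)
  have "3\<^sup>2 \<le> pi\<^sup>2"
    using pi_gt3 by (intro power_mono) auto
  then have "0 \<le> ?slack"
    using k by simp
  then show "\<exists>A \<in> sets (sample_space PZ n). emeasure (sample_space PZ n) A \<ge> ennreal (1 - \<epsilon>) \<and>
      (\<forall>S \<in> A. wireless_gen_err PZ loss n S Mw (PWS S) Pw \<sigma>0
        \<le> ereal (k * \<sigma>\<^sup>2 / (2 * real n)) + (KL_div (PWS S) Q - ereal (ln \<epsilon>)) / ereal k + ereal (?bias + ?slack))"
    using A bound unfolding split by (force elim!: order_trans intro!: add_left_mono)
qed

end
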